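(* Let $\Omega\subset\mathbb{R}^2$ be open, $\lambda>0$, and let $u\in L^2(\Omega)$ satisfy $-\Delta u=\lambda u$ in $\Omega$. Let $\mathbf{x}_0\in\Omega$, $h>0$, $\alpha\in(0,1)$, and let $\mathbf{e}^-,\mathbf{e}^+$ be unit vectors with angle $\alpha\pi$ from $\mathbf{e}^-$ to $\mathbf{e}^+$; put $\Gamma^\pm=\{\mathbf{x}_0+t\mathbf{e}^\pm:0\le t\le h\}\subset\Omega$. Suppose $u=0$ on $\Gamma^+\cup\Gamma^-$ (both are nodal lines). Let $n\in\mathbb{N}$, $n\ge3$. If $\alpha\neq q/p$ for all integers $1\le q<p\le n-1$, then $u$ vanishes up to the order $n$ at $\mathbf{x}_0$, i.e. all partial derivatives of $u$ of order at most $n-1$ vanish at $\mathbf{x}_0$.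
   Context: No boundary condition is imposed on $\partial\Omega$; $u$ is real-analytic in $\Omega$. "Vanishes up to order $n$" means every homogeneous term of degree $<n$ in the Taylor expansion of $u$ at $\mathbf{x}_0$ vanishes. *)

theory Defs
  imports "HOL-Analysis.Analysis"
begin

definition pdx :: "(real \<times> real \<Rightarrow> real) \<Rightarrow> real \<times> real \<Rightarrow> real" where
  "pdx f = (\<lambda>z. deriv (\<lambda>t. f (t, snd z)) (fst z))"

definition pdy :: "(real \<times> real \<Rightarrow> real) \<Rightarrow> real \<times> real \<Rightarrow> real" where
  "pdy f = (\<lambda>z. deriv (\<lambda>t. f (fst z, t)) (snd z))"

definition pder :: "nat \<Rightarrow> nat \<Rightarrow> (real \<times> real \<Rightarrow> real) \<Rightarrow> real \<times> real \<Rightarrow> real" where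
  "pder i j f = (pdx ^^ i) ((pdy ^^ j) f)"

definition smooth_on2 :: "(real \<times> real \<Rightarrow> real) \<Rightarrow> (real \<times> real) set \<Rightarrow> bool" where
  "smooth_on2 f S \<longleftrightarrow> (\<forall>i j. continuous_on S (pder i j f) \<and>
     (\<forall>z\<in>S. (\<lambda>t. pder i j f (t, snd z)) differentiable (at (fst z)) \<and>
            (\<lambda>t. pder i j f (fst z, t)) differentiable (at (snd z))))"

definition laplacian :: "(real \<times> real \<Rightarrow> real) \<Rightarrow> real \<times> real \<Rightarrow> real" where
  "laplacian f = (\<lambda>z. pdx (pdx f) z + pdy (pdy f) z)"

definition vanishes_up_to_order :: "(real \<times> real \<Rightarrow> real) \<Rightarrow> real \<times> real \<Rightarrow> nat \<Rightarrow> bool" where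
  "vanishes_up_to_order f x0 n \<longleftrightarrow> (\<forall>i j. i + j < n \<longrightarrow> pder i j f x0 = 0)"

definition rot :: "real \<Rightarrow> real \<times> real \<Rightarrow> real \<times> real" where
  "rot a v = (cos a * fst v - sin a * snd v, sin a * fst v + cos a * snd v)"

end

theory Submission
  imports Defs
begin

text \<open>Along a nodal ray in direction \<open>e\<close> all derivatives \<open>(e \<cdot> \<nabla>)\<^sup>m u\<close> vanish at \<open>x\<^sub>0\<close>.
  Argue by induction on the order \<open>m\<close>: once all derivatives of order \<open>< m\<close> vanish, the Helmholtz
  equation forces the coefficients \<open>c\<^sub>k = \<partial>\<^sub>x\<^sup>m\<^sup>-\<^sup>k \<partial>\<^sub>y\<^sup>k u(x\<^sub>0)\<close> to satisfy \<open>c\<^sub>k\<^sub>+\<^sub>2 = - c\<^sub>k\<close>, so the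
  homogeneous Taylor term of order \<open>m\<close> is harmonic, \<open>Re (\<zeta> (x + i y)\<^sup>m)\<close>, and its derivative along
  the unit vector of angle \<open>\<psi>\<close> is \<open>Re (\<zeta> e\<^sup>i\<^sup>m\<^sup>\<psi>)\<close>. Vanishing along two directions \<open>\<theta>\<close> and
  \<open>\<theta> + \<alpha>\<pi>\<close> gives \<open>\<zeta> = 0\<close> as long as \<open>sin (m \<alpha> \<pi>) \<noteq> 0\<close>, which is exactly the arithmetic condition on \<open>\<alpha>\<close>.\<close>

lemma eventually_nhds_pair_square:
  fixes a b :: real
  assumes "eventually P (nhds (a, b))"
  obtains d where "d > 0" "\<And>x y. \<bar>x - a\<bar> < d \<Longrightarrow> \<bar>y - b\<bar> < d \<Longrightarrow> P (x, y)"
proof -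
  obtain r where r: "r > 0" "\<And>z. dist z (a, b) < r \<Longrightarrow> P z"
    using assms unfolding eventually_nhds_metric by blast
  show thesis
  proof
    show "r / 2 > 0" using r by simp
    fix x y assume "\<bar>x - a\<bar> < r / 2" "\<bar>y - b\<bar> < r / 2"
    moreover have "dist (x, y) (a, b) \<le> \<bar>x - a\<bar> + \<bar>y - b\<bar>"
      using sqrt_sum_squares_le_sum_abs[of "x - a" "y - b"]
      by (simp add: dist_Pair_Pair dist_real_def)
    ultimately show "P (x, y)" using r by simp
  qed
qed

lemma DERIV_imp_quotient_at_right:
  "(f has_real_derivative L) (at x) \<Longrightarrow> ((\<lambda>h. (f (x + h) - f x) / h) \<longlongrightarrow> L) (at_right 0)"
  unfolding DERIV_def using filterlim_at_split by blast

lemma tendsto_at_right_abs_diff_le: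
  fixes g :: "real \<Rightarrow> real"
  assumes "(g \<longlongrightarrow> l) (at_right 0)" and "\<forall>\<^sub>F h in at_right 0. \<bar>g h - c\<bar> \<le> e"
  shows "\<bar>l - c\<bar> \<le> e"
proof -
  have "((\<lambda>h. \<bar>g h - c\<bar>) \<longlongrightarrow> \<bar>l - c\<bar>) (at_right 0)"
    using assms(1) by (intro tendsto_intros)
  then show ?thesis using assms(2) by (rule tendsto_upperbound) simp
qed

lemma double_difference_mean_value:
  fixes f fy D :: "real \<times> real \<Rightarrow> real"
  assumes "0 < s" "0 < t"
    and fy: "\<And>x y. x \<in> {a..a+s} \<Longrightarrow> y \<in> {b..b+t} \<Longrightarrow>
               ((\<lambda>y. f (x, y)) has_real_derivative fy (x, y)) (at y)"
    and D: "\<And>x y. x \<in> {a..a+s} \<Longrightarrow> y \<in> {b..b+t} \<Longrightarrow>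
               ((\<lambda>x. fy (x, y)) has_real_derivative D (x, y)) (at x)"
  obtains \<xi> \<eta> where "a < \<xi>" "\<xi> < a + s" "b < \<eta>" "\<eta> < b + t"
    and "(f (a + s, b + t) - f (a, b + t)) - (f (a + s, b) - f (a, b)) = s * t * D (\<xi>, \<eta>)"
proof -
  have "\<exists>\<eta>>b. \<eta> < b + t \<and> (f (a + s, b + t) - f (a, b + t)) - (f (a + s, b) - f (a, b))
            = (b + t - b) * (fy (a + s, \<eta>) - fy (a, \<eta>))"
    using \<open>0 < s\<close> \<open>0 < t\<close>
    by (intro MVT2[where f = "\<lambda>y. f (a + s, y) - f (a, y)"]) (auto intro!: derivative_eq_intros fy)
  then obtain \<eta> where \<eta>: "b < \<eta>" "\<eta> < b + t" and
    mvt_y: "(f (a + s, b + t) - f (a, b + t)) - (f (a + s, b) - f (a, b))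
            = t * (fy (a + s, \<eta>) - fy (a, \<eta>))"
    by auto
  have "\<exists>\<xi>>a. \<xi> < a + s \<and> fy (a + s, \<eta>) - fy (a, \<eta>) = (a + s - a) * D (\<xi>, \<eta>)"
    using \<eta> \<open>0 < s\<close> by (intro MVT2[where f = "\<lambda>x. fy (x, \<eta>)"]) (auto intro!: D)
  then obtain \<xi> where \<xi>: "a < \<xi>" "\<xi> < a + s" and
    mvt_x: "fy (a + s, \<eta>) - fy (a, \<eta>) = s * D (\<xi>, \<eta>)"
    by auto
  show thesis
    by (rule that[OF \<xi> \<eta>]) (use mvt_y mvt_x in \<open>simp add: algebra_simps\<close>)
qed

lemma mixed_partials_commute:
  fixes f fx fy D :: "real \<times> real \<Rightarrow> real"
  assumes S: "open S" "(a, b) \<in> S"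
    and fx: "\<And>z. z \<in> S \<Longrightarrow> ((\<lambda>x. f (x, snd z)) has_real_derivative fx z) (at (fst z))"
    and fy: "\<And>z. z \<in> S \<Longrightarrow> ((\<lambda>y. f (fst z, y)) has_real_derivative fy z) (at (snd z))"
    and D: "\<And>z. z \<in> S \<Longrightarrow> ((\<lambda>x. fy (x, snd z)) has_real_derivative D z) (at (fst z))"
    and "isCont D (a, b)"
    and L: "((\<lambda>y. fx (a, y)) has_real_derivative L) (at b)"
  shows "L = D (a, b)"
proof -
  have "\<bar>L - D (a, b)\<bar> \<le> e" if "e > 0" for e
  proof -
    have "\<forall>\<^sub>F z in nhds (a, b). \<bar>D z - D (a, b)\<bar> \<le> e"
      using tendstoD[OF \<open>isCont D (a, b)\<close>[unfolded isCont_def] \<open>e > 0\<close>] \<open>e > 0\<close>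
      by (auto simp: eventually_nhds_conv_at dist_real_def elim: eventually_mono)
    with eventually_nhds_in_open[OF S]
    have "\<forall>\<^sub>F z in nhds (a, b). z \<in> S \<and> \<bar>D z - D (a, b)\<bar> \<le> e"
      by (rule eventually_conj)
    then obtain d where "d > 0" and near:
      "\<And>x y. \<bar>x - a\<bar> < d \<Longrightarrow> \<bar>y - b\<bar> < d \<Longrightarrow> (x, y) \<in> S \<and> \<bar>D (x, y) - D (a, b)\<bar> \<le> e"
      by (rule eventually_nhds_pair_square) blast
    have rectangle: "\<bar>((f (a + s, b + t) - f (a, b + t)) / s - (f (a + s, b) - f (a, b)) / s) / t
      - D (a, b)\<bar> \<le> e"
      if st: "0 < s" "s < d" "0 < t" "t < d" for s t
    proof -
      have in_S: "(x, y) \<in> S" if "x \<in> {a..a+s}" "y \<in> {b..b+t}" for x y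
        using near[of x y] st that by auto
      obtain \<xi> \<eta> where "a < \<xi>" "\<xi> < a + s" "b < \<eta>" "\<eta> < b + t"
        and "(f (a + s, b + t) - f (a, b + t)) - (f (a + s, b) - f (a, b)) = s * t * D (\<xi>, \<eta>)"
        using double_difference_mean_value[of s t a b f fy D] st fy[OF in_S] D[OF in_S] by auto
      then have "((f (a + s, b + t) - f (a, b + t)) / s - (f (a + s, b) - f (a, b)) / s) / t = D (\<xi>, \<eta>)"
        using st by (simp add: diff_divide_distrib[symmetric] divide_divide_eq_left)
      then show ?thesis using st \<open>a < \<xi>\<close> \<open>\<xi> < a + s\<close> \<open>b < \<eta>\<close> \<open>\<eta> < b + t\<close> near[of \<xi> \<eta>] by simp
    qed
    have "\<bar>(fx (a, b + t) - fx (a, b)) / t - D (a, b)\<bar> \<le> e" if "0 < t" "t < d" for t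
    proof (rule tendsto_at_right_abs_diff_le)
      show "((\<lambda>s. ((f (a + s, b + t) - f (a, b + t)) / s - (f (a + s, b) - f (a, b)) / s) / t)
          \<longlongrightarrow> (fx (a, b + t) - fx (a, b)) / t) (at_right 0)"
        using fx[of "(a, b + t)"] fx[of "(a, b)"] near[of a "b + t"] near[of a b] that \<open>d > 0\<close>
        by (intro tendsto_intros DERIV_imp_quotient_at_right) auto
      show "\<forall>\<^sub>F s in at_right 0. \<bar>((f (a + s, b + t) - f (a, b + t)) / s - (f (a + s, b) - f (a, b)) / s) / t
          - D (a, b)\<bar> \<le> e"
        unfolding eventually_at_right_field using \<open>d > 0\<close> rectangle that by blast
    qed
    then show ?thesis
      using \<open>d > 0\<close> by (intro tendsto_at_right_abs_diff_le[OF DERIV_imp_quotient_at_right[OF L]])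
        (auto simp: eventually_at_right_field)
  qed
  then show ?thesis using field_le_epsilon[of "\<bar>L - D (a, b)\<bar>" 0] by simp
qed

lemma has_derivative_of_partials:
  fixes f fx fy :: "real \<times> real \<Rightarrow> real"
  assumes "open S" "(a, b) \<in> S"
    and fx: "\<And>z. z \<in> S \<Longrightarrow> ((\<lambda>x. f (x, snd z)) has_real_derivative fx z) (at (fst z))"
    and fy: "\<And>z. z \<in> S \<Longrightarrow> ((\<lambda>y. f (fst z, y)) has_real_derivative fy z) (at (snd z))"
    and "continuous_on S fy"
  shows "(f has_derivative (\<lambda>v. fx (a, b) * fst v + fy (a, b) * snd v)) (at (a, b))"
proof -
  obtain d where "d > 0" and box: "\<And>x y. \<bar>x - a\<bar> < d \<Longrightarrow> \<bar>y - b\<bar> < d \<Longrightarrow> (x, y) \<in> S"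
    using eventually_nhds_in_open[OF assms(1,2)] by (rule eventually_nhds_pair_square) blast
  have in_S: "(x, y) \<in> S" if "x \<in> ball a d" "y \<in> ball b d" for x y
    using box that by (simp add: dist_real_def abs_minus_commute)
  have "((\<lambda>(x, y). f (x, y)) has_derivative
      (\<lambda>(tx, ty). fx (a, b) * tx + blinfun_apply (blinfun_mult_right (fy (a, b))) ty))
      (at (a, b) within ball a d \<times> ball b d)"
  proof (rule has_derivative_partialsI)
    show "((\<lambda>x. f (x, b)) has_derivative (*) (fx (a, b))) (at a within ball a d)"
      using fx[OF assms(2)] by (auto simp: has_field_derivative_def intro: has_derivative_at_withinI)
    show "((\<lambda>y. f (x, y)) has_derivative blinfun_apply (blinfun_mult_right (fy (x, y)))) (at y within ball b d)"
      if "x \<in> ball a d" "y \<in> ball b d" for x y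
      using fy[OF in_S[OF that]] by (auto simp: has_field_derivative_def intro: has_derivative_at_withinI)
    have "isCont fy (a, b)"
      using assms continuous_on_eq_continuous_at by blast
    then show "continuous (at (a, b) within ball a d \<times> ball b d) (\<lambda>(x, y). blinfun_mult_right (fy (x, y)))"
      by (simp add: continuous_at_imp_continuous_within case_prod_beta' continuous_intros)
  qed (use \<open>d > 0\<close> in auto)
  then show ?thesis
    using at_within_open[of "(a, b)" "ball a d \<times> ball b d"] \<open>d > 0\<close>
    by (simp add: case_prod_beta' open_Times)
qed

lemma has_real_derivative_along_line:
  fixes f fx fy :: "real \<times> real \<Rightarrow> real"
  assumes "open S" "p + t *\<^sub>R e \<in> S"
    and "\<And>z. z \<in> S \<Longrightarrow> ((\<lambda>x. f (x, snd z)) has_real_derivative fx z) (at (fst z))"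
    and "\<And>z. z \<in> S \<Longrightarrow> ((\<lambda>y. f (fst z, y)) has_real_derivative fy z) (at (snd z))"
    and "continuous_on S fy"
  shows "((\<lambda>s. f (p + s *\<^sub>R e)) has_real_derivative
           fst e * fx (p + t *\<^sub>R e) + snd e * fy (p + t *\<^sub>R e)) (at t)"
proof -
  have line: "((\<lambda>s. p + s *\<^sub>R e) has_derivative (\<lambda>s. s *\<^sub>R e)) (at t)"
    by (auto intro!: derivative_eq_intros)
  have "(f has_derivative (\<lambda>v. fx (p + t *\<^sub>R e) * fst v + fy (p + t *\<^sub>R e) * snd v)) (at (p + t *\<^sub>R e))"
    using has_derivative_of_partials[of S "fst (p + t *\<^sub>R e)" "snd (p + t *\<^sub>R e)" f fx fy,
        unfolded prod.collapse] assms by blast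
  from has_derivative_compose[OF line this] show ?thesis
    unfolding has_field_derivative_def
    by (rule has_derivative_eq_rhs) (auto simp: algebra_simps fun_eq_iff)
qed

lemma DERIV_eq_0_if_vanishes_on_open:
  fixes g :: "real \<Rightarrow> real"
  assumes "open A" "x \<in> A" "\<And>y. y \<in> A \<Longrightarrow> g y = 0" and "(g has_real_derivative c) (at x)"
  shows "c = 0"
proof -
  have "(g has_real_derivative 0) (at x)"
    by (rule has_field_derivative_transform_within_open[OF DERIV_const assms(1,2)]) (use assms(3) in auto)
  with assms(4) show ?thesis by (rule DERIV_unique)
qed

text \<open>\<open>(e\<^sub>1 \<partial>\<^sub>x + e\<^sub>2 \<partial>\<^sub>y)\<^sup>m = (\<Sum>k\<le>m. dir_coeff e m k \<partial>\<^sub>x\<^sup>m\<^sup>-\<^sup>k \<partial>\<^sub>y\<^sup>k)\<close>, i.e.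
  \<open>dir_coeff e m k = (m choose k) e\<^sub>1\<^sup>m\<^sup>-\<^sup>k e\<^sub>2\<^sup>k\<close>; the recursion is one more application of the operator.\<close>

fun dir_coeff :: "real \<times> real \<Rightarrow> nat \<Rightarrow> nat \<Rightarrow> real" where
  "dir_coeff e 0 k = (if k = 0 then 1 else 0)"
| "dir_coeff e (Suc m) k = fst e * dir_coeff e m k + (if k = 0 then 0 else snd e * dir_coeff e m (k - 1))"

lemma dir_coeff_eq_0: "m < k \<Longrightarrow> dir_coeff e m k = 0"
  by (induction m arbitrary: k) auto

lemma dir_coeff_sum_Suc:
  fixes G :: "nat \<Rightarrow> nat \<Rightarrow> 'a::real_vector"
  shows "(\<Sum>k\<le>Suc m. dir_coeff e (Suc m) k *\<^sub>R G (Suc m - k) k) =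
     fst e *\<^sub>R (\<Sum>k\<le>m. dir_coeff e m k *\<^sub>R G (Suc (m - k)) k)
     + snd e *\<^sub>R (\<Sum>k\<le>m. dir_coeff e m k *\<^sub>R G (m - k) (Suc k))"
proof -
  have "(\<Sum>k\<le>Suc m. dir_coeff e (Suc m) k *\<^sub>R G (Suc m - k) k) =
        (\<Sum>k\<le>Suc m. (fst e * dir_coeff e m k) *\<^sub>R G (Suc m - k) k) +
        (\<Sum>k\<le>Suc m. (if k = 0 then 0 else snd e * dir_coeff e m (k - 1)) *\<^sub>R G (Suc m - k) k)"
    by (simp add: scaleR_add_left sum.distrib)
  also have "(\<Sum>k\<le>Suc m. (fst e * dir_coeff e m k) *\<^sub>R G (Suc m - k) k)
      = fst e *\<^sub>R (\<Sum>k\<le>m. dir_coeff e m k *\<^sub>R G (Suc (m - k)) k)"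
    by (simp add: dir_coeff_eq_0 scaleR_sum_right Suc_diff_le)
  also have "(\<Sum>k\<le>Suc m. (if k = 0 then 0 else snd e * dir_coeff e m (k - 1)) *\<^sub>R G (Suc m - k) k)
      = snd e *\<^sub>R (\<Sum>k\<le>m. dir_coeff e m k *\<^sub>R G (m - k) (Suc k))"
    by (simp add: sum.atMost_Suc_shift scaleR_sum_right del: sum.atMost_Suc)
  finally show ?thesis .
qed

lemma dir_coeff_sum_power:
  fixes z :: complex
  shows "(\<Sum>k\<le>m. dir_coeff e m k *\<^sub>R z ^ k) = (of_real (fst e) + of_real (snd e) * z) ^ m"
proof (induction m)
  case 0
  then show ?case by simp
next
  case (Suc m)
  have "(\<Sum>k\<le>Suc m. dir_coeff e (Suc m) k *\<^sub>R z ^ k) =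
     fst e *\<^sub>R (\<Sum>k\<le>m. dir_coeff e m k *\<^sub>R z ^ k) + snd e *\<^sub>R (z * (\<Sum>k\<le>m. dir_coeff e m k *\<^sub>R z ^ k))"
    using dir_coeff_sum_Suc[of e m "\<lambda>i k. z ^ k"] by (simp add: sum_distrib_left algebra_simps)
  then show ?case using Suc by (simp add: scaleR_conv_of_real algebra_simps)
qed

lemma dir_coeff_sum_cis:
  assumes "\<And>k. k \<le> m \<Longrightarrow> c k = Re (\<zeta> * \<i> ^ k)"
  shows "(\<Sum>k\<le>m. dir_coeff (cos \<psi>, sin \<psi>) m k * c k) = Re (\<zeta> * cis (real m * \<psi>))"
proof -
  have "(\<Sum>k\<le>m. dir_coeff (cos \<psi>, sin \<psi>) m k * c k)
      = (\<Sum>k\<le>m. Re (\<zeta> * (dir_coeff (cos \<psi>, sin \<psi>) m k *\<^sub>R \<i> ^ k)))"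
    by (intro sum.cong) (auto simp: assms scaleR_conv_of_real algebra_simps)
  also have "\<dots> = Re (\<zeta> * (\<Sum>k\<le>m. dir_coeff (cos \<psi>, sin \<psi>) m k *\<^sub>R \<i> ^ k))"
    by (simp add: Re_sum sum_distrib_left)
  also have "(\<Sum>k\<le>m. dir_coeff (cos \<psi>, sin \<psi>) m k *\<^sub>R \<i> ^ k) = cis \<psi> ^ m"
  proof -
    have "of_real (cos \<psi>) + of_real (sin \<psi>) * \<i> = cis \<psi>"
      by (simp add: complex_eq_iff)
    then show ?thesis using dir_coeff_sum_power[of "(cos \<psi>, sin \<psi>)" m \<i>] by simp
  qed
  finally show ?thesis by (simp add: Complex.DeMoivre)
qed

lemma eq_Re_mult_ii_power_if_alternating:
  fixes c :: "nat \<Rightarrow> real"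
  assumes "\<And>k. k + 2 \<le> m \<Longrightarrow> c (k + 2) = - c k" and "k \<le> m"
  shows "c k = Re (Complex (c 0) (- c 1) * \<i> ^ k)"
  using assms(2)
proof (induction k rule: less_induct)
  case (less k)
  consider "k = 0" | "k = 1" | j where "k = j + 2"
    by (metis One_nat_def add_2_eq_Suc' not0_implies_Suc)
  then show ?case
  proof cases
    case 3
    then have "c k = - c j" using assms(1) less.prems by blast
    also have "c j = Re (Complex (c 0) (- c 1) * \<i> ^ j)"
      using less.IH[of j] less.prems 3 by simp
    finally show ?thesis by (simp add: 3 power_add)
  qed simp_all
qed

lemma complex_eq_0_if_Re_rotations_eq_0:
  assumes "Re w = 0" "Re (w * cis \<phi>) = 0" "sin \<phi> \<noteq> 0"
  shows "w = 0"
  using assms by (simp add: complex_eq_iff)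

lemma alternating_coeffs_eq_0_if_two_directions:
  fixes c :: "nat \<Rightarrow> real"
  assumes alternating: "\<And>k. k + 2 \<le> m \<Longrightarrow> c (k + 2) = - c k"
    and "(\<Sum>k\<le>m. dir_coeff (cos \<theta>, sin \<theta>) m k * c k) = 0"
    and "(\<Sum>k\<le>m. dir_coeff (cos (\<theta> + \<phi>), sin (\<theta> + \<phi>)) m k * c k) = 0"
    and "sin (real m * \<phi>) \<noteq> 0" and "k \<le> m"
  shows "c k = 0"
proof -
  define \<zeta> where "\<zeta> = Complex (c 0) (- c 1)"
  have c: "c k = Re (\<zeta> * \<i> ^ k)" if "k \<le> m" for k
    unfolding \<zeta>_def using eq_Re_mult_ii_power_if_alternating[of m c] alternating that by blast
  note sum_eq = dir_coeff_sum_cis[of m c \<zeta>, OF c]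
  have "Re (\<zeta> * cis (real m * \<theta>)) = 0"
    using sum_eq[of \<theta>] assms(2) by linarith
  moreover have "Re (\<zeta> * cis (real m * \<theta>) * cis (real m * \<phi>)) = 0"
  proof -
    have "\<zeta> * cis (real m * \<theta>) * cis (real m * \<phi>) = \<zeta> * cis (real m * (\<theta> + \<phi>))"
      by (simp add: cis_mult distrib_left mult.assoc)
    moreover have "Re (\<zeta> * cis (real m * (\<theta> + \<phi>))) = 0"
      using sum_eq[of "\<theta> + \<phi>"] assms(3) by linarith
    ultimately show ?thesis by (simp only:)
  qed
  ultimately have "\<zeta> * cis (real m * \<theta>) = 0"
    using assms(4) by (rule complex_eq_0_if_Re_rotations_eq_0)
  then show ?thesis using c[OF \<open>k \<le> m\<close>] by simp
qed

lemma sin_mult_pi_neq_0: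
  assumes "0 < \<alpha>" "\<alpha> < 1" "m \<ge> 1"
    and "\<And>q :: int. 0 < q \<Longrightarrow> q < int m \<Longrightarrow> \<alpha> \<noteq> of_int q / real m"
  shows "sin (real m * (\<alpha> * pi)) \<noteq> 0"
proof
  assume "sin (real m * (\<alpha> * pi)) = 0"
  then obtain q :: int where "real m * (\<alpha> * pi) = of_int q * pi"
    using sin_zero_iff_int2 by blast
  then have q: "real m * \<alpha> = of_int q" by simp
  have "0 < real m * \<alpha>" "real m * \<alpha> < real m"
    using assms(1-3) by auto
  with q have "0 < q" "q < int m" by linarith+
  moreover have "\<alpha> = of_int q / real m"
    using q assms(3) by (simp add: field_simps)
  ultimately show False using assms(4) by blast
qed

lemma pdx_pder: "pdx (pder i j u) = pder (Suc i) j u"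
  by (simp add: pder_def)

lemma pdy_pder_0: "pdy (pder 0 j u) = pder 0 (Suc j) u"
  by (simp add: pder_def)

lemma pder_0_0 [simp]: "pder 0 0 u = u"
  by (simp add: pder_def)

definition dir_pder :: "(real \<times> real \<Rightarrow> real) \<Rightarrow> real \<times> real \<Rightarrow> nat \<Rightarrow> real \<times> real \<Rightarrow> real" where
  "dir_pder u e m z = (\<Sum>k\<le>m. dir_coeff e m k * pder (m - k) k u z)"

context
  fixes u :: "real \<times> real \<Rightarrow> real" and \<Omega> :: "(real \<times> real) set"
  assumes open_\<Omega>: "open \<Omega>" and smooth: "smooth_on2 u \<Omega>"
begin

lemma continuous_on_pder: "continuous_on \<Omega> (pder i j u)"
  using smooth by (simp add: smooth_on2_def)

lemma has_real_derivative_pder_x: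
  "z \<in> \<Omega> \<Longrightarrow> ((\<lambda>t. pder i j u (t, snd z)) has_real_derivative pder (Suc i) j u z) (at (fst z))"
  using smooth unfolding smooth_on2_def
  by (simp add: DERIV_deriv_iff_real_differentiable pdx_def flip: pdx_pder)

lemma has_real_derivative_pdy_pder:
  "z \<in> \<Omega> \<Longrightarrow> ((\<lambda>t. pder i j u (fst z, t)) has_real_derivative pdy (pder i j u) z) (at (snd z))"
  using smooth unfolding smooth_on2_def
  by (simp add: DERIV_deriv_iff_real_differentiable pdy_def)

lemma pdy_pder: "z \<in> \<Omega> \<Longrightarrow> pdy (pder i j u) z = pder i (Suc j) u z"
proof (induction i arbitrary: j z)
  case 0
  then show ?case by (simp add: pdy_pder_0)
next
  case (Suc i)
  obtain a b where z: "z = (a, b)" by fastforce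
  have "pdy (pder (Suc i) j u) (a, b) = pder (Suc i) (Suc j) u (a, b)"
  proof (rule mixed_partials_commute[OF open_\<Omega>])
    show "(a, b) \<in> \<Omega>" using Suc.prems z by simp
    then show "isCont (pder (Suc i) (Suc j) u) (a, b)"
      using continuous_on_pder open_\<Omega> continuous_on_eq_continuous_at by blast
    show "((\<lambda>y. pder (Suc i) j u (a, y)) has_real_derivative pdy (pder (Suc i) j u) (a, b)) (at b)"
      using has_real_derivative_pdy_pder[of "(a, b)"] \<open>(a, b) \<in> \<Omega>\<close> by simp
    show "((\<lambda>y. pder i j u (fst w, y)) has_real_derivative pder i (Suc j) u w) (at (snd w))"
      if "w \<in> \<Omega>" for w
      using has_real_derivative_pdy_pder[OF that, of i j] Suc.IH[OF that, of j] by simp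
  qed (fact has_real_derivative_pder_x)+
  then show ?case using z by simp
qed

lemma has_real_derivative_pder_y:
  "z \<in> \<Omega> \<Longrightarrow> ((\<lambda>t. pder i j u (fst z, t)) has_real_derivative pder i (Suc j) u z) (at (snd z))"
  using has_real_derivative_pdy_pder pdy_pder by metis

lemma partial_x_eq_0_if_vanishes:
  assumes "z \<in> \<Omega>" "\<And>w. w \<in> \<Omega> \<Longrightarrow> g w = 0"
    and "((\<lambda>t. g (t, snd z)) has_real_derivative c) (at (fst z))"
  shows "c = 0"
proof (rule DERIV_eq_0_if_vanishes_on_open[OF _ _ _ assms(3)])
  show "open ((\<lambda>t. (t, snd z)) -` \<Omega>)"
    by (rule open_vimage[OF open_\<Omega>]) (intro continuous_intros)
qed (use assms in auto)

lemma partial_y_eq_0_if_vanishes: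
  assumes "z \<in> \<Omega>" "\<And>w. w \<in> \<Omega> \<Longrightarrow> g w = 0"
    and "((\<lambda>t. g (fst z, t)) has_real_derivative c) (at (snd z))"
  shows "c = 0"
proof (rule DERIV_eq_0_if_vanishes_on_open[OF _ _ _ assms(3)])
  show "open ((\<lambda>t. (fst z, t)) -` \<Omega>)"
    by (rule open_vimage[OF open_\<Omega>]) (intro continuous_intros)
qed (use assms in auto)

lemma has_real_derivative_dir_pder_along_line:
  assumes "p + t *\<^sub>R e \<in> \<Omega>"
  shows "((\<lambda>s. dir_pder u e m (p + s *\<^sub>R e)) has_real_derivative dir_pder u e (Suc m) (p + t *\<^sub>R e)) (at t)"
proof -
  define q where "q = p + t *\<^sub>R e"
  have "((\<lambda>s. dir_pder u e m (p + s *\<^sub>R e)) has_real_derivative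
     (\<Sum>k\<le>m. dir_coeff e m k * (fst e * pder (Suc (m - k)) k u q + snd e * pder (m - k) (Suc k) u q))) (at t)"
    unfolding dir_pder_def q_def
    by (intro DERIV_sum DERIV_cmult has_real_derivative_along_line[OF open_\<Omega> assms]
        has_real_derivative_pder_x has_real_derivative_pder_y continuous_on_pder)
  also have "(\<Sum>k\<le>m. dir_coeff e m k * (fst e * pder (Suc (m - k)) k u q + snd e * pder (m - k) (Suc k) u q))
      = dir_pder u e (Suc m) q"
    using dir_coeff_sum_Suc[of e m "\<lambda>i k. pder i k u q"]
    by (simp add: dir_pder_def distrib_left sum.distrib sum_distrib_left mult.left_commute del: dir_coeff.simps)
  finally show ?thesis by (simp add: q_def)
qed

lemma continuous_on_dir_pder: "continuous_on \<Omega> (dir_pder u e m)"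
  unfolding dir_pder_def by (intro continuous_intros continuous_on_pder)

context
  fixes x0 e :: "real \<times> real" and h :: real
  assumes segment: "\<And>t. 0 \<le> t \<Longrightarrow> t \<le> h \<Longrightarrow> x0 + t *\<^sub>R e \<in> \<Omega>"
    and nodal: "\<And>t. 0 \<le> t \<Longrightarrow> t \<le> h \<Longrightarrow> u (x0 + t *\<^sub>R e) = 0"
begin

lemma dir_pder_eq_0_on_segment:
  "0 < t \<Longrightarrow> t < h \<Longrightarrow> dir_pder u e m (x0 + t *\<^sub>R e) = 0"
proof (induction m arbitrary: t)
  case 0
  then show ?case using nodal[of t] by (simp add: dir_pder_def)
next
  case (Suc m)
  have "((\<lambda>s. dir_pder u e m (x0 + s *\<^sub>R e)) has_real_derivative 0) (at t)"
    using Suc by (intro has_field_derivative_transform_within_open[OF DERIV_const, of "{0<..<h}"]) auto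
  with has_real_derivative_dir_pder_along_line[of x0 t e m] show ?case
    using segment Suc.prems DERIV_unique by force
qed

lemma dir_pder_eq_0_at_start:
  assumes "h > 0"
  shows "dir_pder u e m x0 = 0"
proof -
  have "x0 \<in> \<Omega>" using segment[of 0] assms by simp
  then have "isCont (dir_pder u e m) x0"
    using continuous_on_eq_continuous_at[OF open_\<Omega>] continuous_on_dir_pder by blast
  then have "isCont (\<lambda>t. dir_pder u e m (x0 + t *\<^sub>R e)) 0"
    using isCont_o2[where f = "\<lambda>t. x0 + t *\<^sub>R e" and a = 0] by (auto intro: continuous_intros)
  then have "((\<lambda>t. dir_pder u e m (x0 + t *\<^sub>R e)) \<longlongrightarrow> dir_pder u e m x0) (at_right 0)"
    by (simp add: isCont_def filterlim_at_split)
  moreover have "\<forall>\<^sub>F t in at_right 0. dir_pder u e m (x0 + t *\<^sub>R e) = 0"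
    unfolding eventually_at_right_field using assms dir_pder_eq_0_on_segment by blast
  ultimately have "((\<lambda>t. 0) \<longlongrightarrow> dir_pder u e m x0) (at_right (0::real))"
    by (rule Lim_transform_eventually)
  then show ?thesis by (simp add: tendsto_const_iff)
qed

end

context
  fixes lam :: real
  assumes helmholtz: "\<forall>z\<in>\<Omega>. - laplacian u z = lam * u z"
begin

lemma helmholtz_pder_0:
  "z \<in> \<Omega> \<Longrightarrow> pder 2 j u z + pder 0 (j + 2) u z + lam * pder 0 j u z = 0"
proof (induction j arbitrary: z)
  case 0
  then show ?case
    using helmholtz[rule_format, OF 0] by (simp add: pder_def numeral_2_eq_2 laplacian_def)
next
  case (Suc j)
  have "((\<lambda>t. pder 2 j u (fst z, t) + pder 0 (j + 2) u (fst z, t) + lam * pder 0 j u (fst z, t))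
      has_real_derivative pder 2 (Suc j) u z + pder 0 (Suc (j + 2)) u z + lam * pder 0 (Suc j) u z)
      (at (snd z))"
    using has_real_derivative_pder_y[OF Suc.prems, of 2 j] has_real_derivative_pder_y[OF Suc.prems, of 0 "j + 2"]
      has_real_derivative_pder_y[OF Suc.prems, of 0 j]
    by (auto intro!: derivative_eq_intros)
  then have "pder 2 (Suc j) u z + pder 0 (Suc (j + 2)) u z + lam * pder 0 (Suc j) u z = 0"
    by (rule partial_y_eq_0_if_vanishes[OF Suc.prems, rotated,
          where g = "\<lambda>w. pder 2 j u w + pder 0 (j + 2) u w + lam * pder 0 j u w"]) (rule Suc.IH)
  then show ?case by simp
qed

lemma helmholtz_pder:
  "z \<in> \<Omega> \<Longrightarrow> pder (i + 2) j u z + pder i (j + 2) u z + lam * pder i j u z = 0"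
proof (induction i arbitrary: z)
  case 0
  then show ?case using helmholtz_pder_0[OF 0, of j] by (simp add: numeral_2_eq_2)
next
  case (Suc i)
  have "((\<lambda>t. pder (i + 2) j u (t, snd z) + pder i (j + 2) u (t, snd z) + lam * pder i j u (t, snd z))
      has_real_derivative pder (Suc (i + 2)) j u z + pder (Suc i) (j + 2) u z + lam * pder (Suc i) j u z)
      (at (fst z))"
    using has_real_derivative_pder_x[OF Suc.prems, of "i + 2" j] has_real_derivative_pder_x[OF Suc.prems, of i "j + 2"]
      has_real_derivative_pder_x[OF Suc.prems, of i j]
    by (auto intro!: derivative_eq_intros)
  then have "pder (Suc (i + 2)) j u z + pder (Suc i) (j + 2) u z + lam * pder (Suc i) j u z = 0"
    by (rule partial_x_eq_0_if_vanishes[OF Suc.prems, rotated,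
          where g = "\<lambda>w. pder (i + 2) j u w + pder i (j + 2) u w + lam * pder i j u w"]) (rule Suc.IH)
  then show ?case by (simp only: add_Suc)
qed

lemma pder_eq_0_if_two_nodal_directions:
  assumes "x0 \<in> \<Omega>"
    and lower: "\<And>k. k + 2 \<le> m \<Longrightarrow> pder (m - 2 - k) k u x0 = 0"
    and "dir_pder u (cos \<theta>, sin \<theta>) m x0 = 0"
    and "dir_pder u (cos (\<theta> + \<phi>), sin (\<theta> + \<phi>)) m x0 = 0"
    and "sin (real m * \<phi>) \<noteq> 0" and "k \<le> m"
  shows "pder (m - k) k u x0 = 0"
proof -
  have "pder (m - (k + 2)) (k + 2) u x0 = - pder (m - k) k u x0" if "k + 2 \<le> m" for k
  proof -
    have "pder (m - k - 2 + 2) k u x0 + pder (m - k - 2) (k + 2) u x0 + lam * pder (m - k - 2) k u x0 = 0"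
      by (rule helmholtz_pder[OF \<open>x0 \<in> \<Omega>\<close>])
    moreover have "m - k - 2 = m - 2 - k" "m - k - 2 + 2 = m - k" "m - (k + 2) = m - 2 - k"
      using that by auto
    ultimately show ?thesis using lower[OF that] by simp
  qed
  then show ?thesis
    using alternating_coeffs_eq_0_if_two_directions[of m "\<lambda>k. pder (m - k) k u x0"] assms(3-6)
    unfolding dir_pder_def by blast
qed

lemma vanishes_up_to_order_if_two_nodal_directions:
  assumes "x0 \<in> \<Omega>"
    and "\<And>m. dir_pder u (cos \<theta>, sin \<theta>) m x0 = 0"
    and "\<And>m. dir_pder u (cos (\<theta> + \<phi>), sin (\<theta> + \<phi>)) m x0 = 0"
    and "\<And>m. 0 < m \<Longrightarrow> m < n \<Longrightarrow> sin (real m * \<phi>) \<noteq> 0"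
  shows "vanishes_up_to_order u x0 n"
proof -
  have "\<forall>k\<le>m. pder (m - k) k u x0 = 0" if "m < n" for m
    using that
  proof (induction m rule: less_induct)
    case (less m)
    show ?case
    proof (cases "m = 0")
      case True
      then show ?thesis using assms(2)[of 0] by (simp add: dir_pder_def)
    next
      case False
      have "pder (m - 2 - k) k u x0 = 0" if "k + 2 \<le> m" for k
        using less.IH[of "m - 2"] less.prems that by auto
      with False show ?thesis
        using pder_eq_0_if_two_nodal_directions[OF assms(1)] assms(2-4) less.prems by blast
    qed
  qed
  then show ?thesis
    unfolding vanishes_up_to_order_def by (metis add_diff_cancel_right' le_add2)
qed

end

end


theorem theorem3p2:
  fixes \<Omega> :: "(real \<times> real) set" and u :: "real \<times> real \<Rightarrow> real"
    and lam h \<alpha> :: real and x0 em ep :: "real \<times> real" and n :: nat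
  assumes "open \<Omega>" and "lam > 0"
    and "(\<lambda>z. (u z)\<^sup>2) integrable_on \<Omega>"
    and "smooth_on2 u \<Omega>"
    and "\<forall>z\<in>\<Omega>. - laplacian u z = lam * u z"
    and "x0 \<in> \<Omega>" and "h > 0" and "0 < \<alpha>" and "\<alpha> < 1"
    and "norm em = 1" and "ep = rot (\<alpha> * pi) em"
    and "{x0 + t *\<^sub>R ep | t. 0 \<le> t \<and> t \<le> h} \<subseteq> \<Omega>"
    and "{x0 + t *\<^sub>R em | t. 0 \<le> t \<and> t \<le> h} \<subseteq> \<Omega>"
    and "\<forall>t. 0 \<le> t \<and> t \<le> h \<longrightarrow> u (x0 + t *\<^sub>R ep) = 0"
    and "\<forall>t. 0 \<le> t \<and> t \<le> h \<longrightarrow> u (x0 + t *\<^sub>R em) = 0"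
    and "n \<ge> 3"
    and "\<forall>p q :: int. 1 \<le> q \<and> q < p \<and> p \<le> int n - 1 \<longrightarrow> \<alpha> \<noteq> of_int q / of_int p"
  shows "vanishes_up_to_order u x0 n"
proof -
  have "(fst em)\<^sup>2 + (snd em)\<^sup>2 = 1"
    using \<open>norm em = 1\<close> by (cases em) (simp add: norm_Pair)
  then obtain \<theta> where em: "em = (cos \<theta>, sin \<theta>)"
    by (metis sincos_total_2pi prod.collapse)
  have ep: "ep = (cos (\<theta> + \<alpha> * pi), sin (\<theta> + \<alpha> * pi))"
    using \<open>ep = rot (\<alpha> * pi) em\<close> em by (simp add: rot_def cos_add sin_add algebra_simps)
  have "dir_pder u em m x0 = 0" for m
    by (rule dir_pder_eq_0_at_start[OF assms(1,4) _ _ \<open>h > 0\<close>]) (use assms(13,15) in blast)+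
  moreover have "dir_pder u ep m x0 = 0" for m
    by (rule dir_pder_eq_0_at_start[OF assms(1,4) _ _ \<open>h > 0\<close>]) (use assms(12,14) in blast)+
  moreover have "sin (real m * (\<alpha> * pi)) \<noteq> 0" if "0 < m" "m < n" for m
  proof (rule sin_mult_pi_neq_0)
    show "\<alpha> \<noteq> of_int q / real m" if "0 < q" "q < int m" for q :: int
      using assms(17)[rule_format, of q "int m"] that \<open>m < n\<close> by simp
  qed (use that assms(8,9) in auto)
  ultimately show ?thesis
    unfolding em ep by (rule vanishes_up_to_order_if_two_nodal_directions[OF assms(1,4,5,6)])
qed

end
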